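(* Let $I$ be a nonzero ideal of $\mathbb{Z}[\sqrt{2}]$. Then there exists a generator $\alpha'$ of $I$ (i.e. $I=(\alpha')$) which is a shortest nonzero vector of $I$ under the canonical embedding, i.e. $\|\Sigma_{\mathbb{Q}(\sqrt2)}(\alpha')\|\le\|\Sigma_{\mathbb{Q}(\sqrt2)}(\gamma)\|$ for every nonzero $\gamma\in I$.
   Context: The canonical embedding of $\mathbb{Q}(\sqrt2)$ is $\Sigma_{\mathbb{Q}(\sqrt2)}(x)=(x,\tau(x))$, where $\tau$ is the nontrivial automorphism ($\tau(\sqrt2)=-\sqrt2$), with $\|\Sigma_{\mathbb{Q}(\sqrt2)}(x)\|^2=x^2+\tau(x)^2$. *)

theory Defs
  imports Complex_Main
begin

text \<open>Elements of Z[sqrt 2] are represented as pairs (a, b) of integers, standing for a + b * sqrt 2.\<close>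

type_synonym zsqrt2 = "int \<times> int"

definition zs_add :: "zsqrt2 \<Rightarrow> zsqrt2 \<Rightarrow> zsqrt2" where
  "zs_add x y = (fst x + fst y, snd x + snd y)"

definition zs_mul :: "zsqrt2 \<Rightarrow> zsqrt2 \<Rightarrow> zsqrt2" where
  "zs_mul x y = (fst x * fst y + 2 * snd x * snd y, fst x * snd y + snd x * fst y)"

definition zs_zero :: zsqrt2 where "zs_zero = (0, 0)"

definition zs_val :: "zsqrt2 \<Rightarrow> real" where
  "zs_val x = of_int (fst x) + of_int (snd x) * sqrt 2"

definition zs_tau :: "zsqrt2 \<Rightarrow> real" where
  "zs_tau x = of_int (fst x) - of_int (snd x) * sqrt 2"

definition emb_norm :: "zsqrt2 \<Rightarrow> real" where
  "emb_norm x = sqrt ((zs_val x)\<^sup>2 + (zs_tau x)\<^sup>2)"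

definition zs_ideal :: "zsqrt2 set \<Rightarrow> bool" where
  "zs_ideal I \<longleftrightarrow> zs_zero \<in> I
     \<and> (\<forall>x\<in>I. \<forall>y\<in>I. zs_add x y \<in> I)
     \<and> (\<forall>r x. x \<in> I \<longrightarrow> zs_mul r x \<in> I)"

definition zs_principal :: "zsqrt2 \<Rightarrow> zsqrt2 set" where
  "zs_principal a = {zs_mul a r | r. True}"

end

theory Submission
  imports Defs
begin

text \<open>Write \<open>N(a + b\<surd>2) = a\<^sup>2 - 2b\<^sup>2\<close> for the field norm and \<open>E(a + b\<surd>2) = 2a\<^sup>2 + 4b\<^sup>2\<close>
  for the squared length of the canonical embedding, so that \<open>E \<ge> 2\<bar>N\<bar>\<close> by AM-GM.
  Since \<open>\<int>[\<surd>2]\<close> is norm-Euclidean, every nonzero element of \<open>I\<close> of minimal \<open>\<bar>N\<bar>\<close>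
  generates \<open>I\<close>. Among these generators choose \<open>\<delta>\<close> with \<open>E(\<delta>)\<close> minimal; comparing
  with the associates \<open>\<delta>(\<plusminus>1 + \<surd>2)\<close> gives \<open>E(\<delta>) < 4\<bar>N(\<delta>)\<bar>\<close>. A nonzero \<open>\<gamma> = \<delta>r\<close>
  in \<open>I\<close> is then either an associate of \<open>\<delta>\<close>, hence no shorter by the choice of \<open>\<delta>\<close>,
  or satisfies \<open>\<bar>N(r)\<bar> \<ge> 2\<close>, whence \<open>E(\<gamma>) \<ge> 2\<bar>N(\<gamma>)\<bar> \<ge> 4\<bar>N(\<delta>)\<bar> > E(\<delta>)\<close>.\<close>

lemma int_sq_eq_2_sq_imp_0:
  fixes a b :: int
  assumes "a\<^sup>2 = 2 * b\<^sup>2"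
  shows "b = 0"
  using assms
proof (induction "nat \<bar>b\<bar>" arbitrary: a b rule: less_induct)
  case less
  have "even (a\<^sup>2)" using less.prems by simp
  then obtain a' where "a = 2 * a'" by auto
  with less.prems have half: "b\<^sup>2 = 2 * a'\<^sup>2" by (simp add: power_mult_distrib)
  show "b = 0"
  proof (rule ccontr)
    assume "b \<noteq> 0"
    then have "0 < b\<^sup>2" by simp
    with half have "a'\<^sup>2 < b\<^sup>2" by linarith
    then have "\<bar>a'\<bar> < \<bar>b\<bar>" using power2_less_imp_less[of "\<bar>a'\<bar>" "\<bar>b\<bar>"] by simp
    then have "nat \<bar>a'\<bar> < nat \<bar>b\<bar>" by simp
    with less.hyps half have "a' = 0" by blast
    with half \<open>b \<noteq> 0\<close> show False by simp
  qed
qed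

lemma exists_round_div:
  fixes c n :: int
  assumes "n \<noteq> 0"
  shows "\<exists>q. 2 * \<bar>c - q * n\<bar> \<le> \<bar>n\<bar>"
proof
  define q where "q = round (c / n)"
  have "\<bar>of_int q - c / n\<bar> \<le> (1 / 2 :: real)"
    unfolding q_def by (rule of_int_round_abs_le)
  then have "\<bar>real_of_int n\<bar> * \<bar>of_int q - c / n\<bar> \<le> \<bar>real_of_int n\<bar> * (1 / 2)"
    by (rule mult_left_mono) simp
  also have "\<bar>real_of_int n\<bar> * \<bar>of_int q - c / n\<bar> = \<bar>of_int (c - q * n)\<bar>"
    using assms by (simp add: abs_mult[symmetric] algebra_simps)
  finally have "real_of_int (2 * \<bar>c - q * n\<bar>) \<le> of_int \<bar>n\<bar>" by simp
  then show "2 * \<bar>c - q * n\<bar> \<le> \<bar>n\<bar>" by (simp only: of_int_le_iff)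
qed

definition zs_norm :: "zsqrt2 \<Rightarrow> int" where
  "zs_norm x = (fst x)\<^sup>2 - 2 * (snd x)\<^sup>2"

definition zs_conj :: "zsqrt2 \<Rightarrow> zsqrt2" where
  "zs_conj x = (fst x, - snd x)"

definition emb_sq :: "zsqrt2 \<Rightarrow> int" where
  "emb_sq x = 2 * (fst x)\<^sup>2 + 4 * (snd x)\<^sup>2"

lemma zs_mul_commute: "zs_mul x y = zs_mul y x"
  unfolding zs_mul_def by (simp add: algebra_simps)

lemma zs_norm_mult: "zs_norm (zs_mul x y) = zs_norm x * zs_norm y"
  unfolding zs_norm_def zs_mul_def by (simp add: power2_eq_square algebra_simps)

lemma zs_norm_conj [simp]: "zs_norm (zs_conj x) = zs_norm x"
  unfolding zs_norm_def zs_conj_def by simp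

lemma zs_norm_eq_0_iff: "zs_norm x = 0 \<longleftrightarrow> x = zs_zero"
proof
  assume "zs_norm x = 0"
  then have "(fst x)\<^sup>2 = 2 * (snd x)\<^sup>2" unfolding zs_norm_def by simp
  moreover from int_sq_eq_2_sq_imp_0[OF this] have "snd x = 0" .
  ultimately show "x = zs_zero" unfolding zs_zero_def by (cases x) auto
qed (simp add: zs_norm_def zs_zero_def)

lemma emb_norm_eq_sqrt_emb_sq: "emb_norm x = sqrt (of_int (emb_sq x))"
  unfolding emb_norm_def emb_sq_def zs_val_def zs_tau_def
  by (simp add: power2_eq_square algebra_simps)

lemma emb_sq_ge_abs_norm: "2 * \<bar>zs_norm x\<bar> \<le> emb_sq x"
  unfolding emb_sq_def zs_norm_def by (simp add: abs_if)

lemma abs_zs_norm_le: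
  assumes "4 * u\<^sup>2 \<le> m" "4 * v\<^sup>2 \<le> m"
  shows "2 * \<bar>zs_norm (u, v)\<bar> \<le> m"
  using assms zero_le_power2[of u] zero_le_power2[of v]
  unfolding zs_norm_def by (smt (verit) fst_conv snd_conv)

lemma zs_euclidean_division:
  assumes "\<beta> \<noteq> zs_zero"
  shows "\<exists>q. 2 * \<bar>zs_norm (zs_add \<gamma> (zs_mul q \<beta>))\<bar> \<le> \<bar>zs_norm \<beta>\<bar>"
proof -
  define n where "n = zs_norm \<beta>"
  have "n \<noteq> 0" using assms by (simp add: n_def zs_norm_eq_0_iff)
  obtain c d where cd: "zs_mul \<gamma> (zs_conj \<beta>) = (c, d)" by fastforce
  obtain q1 q2 where q1: "2 * \<bar>c - q1 * n\<bar> \<le> \<bar>n\<bar>" and q2: "2 * \<bar>d - q2 * n\<bar> \<le> \<bar>n\<bar>"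
    using exists_round_div[OF \<open>n \<noteq> 0\<close>] by metis
  define r where "r = zs_add \<gamma> (zs_mul (- q1, - q2) \<beta>)"
  have "zs_mul r (zs_conj \<beta>) = (c - q1 * n, d - q2 * n)"
    using cd unfolding r_def n_def zs_add_def zs_mul_def zs_conj_def zs_norm_def
    by (auto simp: power2_eq_square algebra_simps)
  then have "zs_norm r * n = zs_norm (c - q1 * n, d - q2 * n)"
    by (metis n_def zs_norm_conj zs_norm_mult)
  moreover have "2 * \<bar>zs_norm (c - q1 * n, d - q2 * n)\<bar> \<le> \<bar>n\<bar> * \<bar>n\<bar>"
  proof (rule abs_zs_norm_le)
    have "(2 * \<bar>c - q1 * n\<bar>)\<^sup>2 \<le> \<bar>n\<bar>\<^sup>2" using q1 by (rule power_mono) simp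
    then show "4 * (c - q1 * n)\<^sup>2 \<le> \<bar>n\<bar> * \<bar>n\<bar>" by (simp add: power2_eq_square)
    have "(2 * \<bar>d - q2 * n\<bar>)\<^sup>2 \<le> \<bar>n\<bar>\<^sup>2" using q2 by (rule power_mono) simp
    then show "4 * (d - q2 * n)\<^sup>2 \<le> \<bar>n\<bar> * \<bar>n\<bar>" by (simp add: power2_eq_square)
  qed
  ultimately have "(2 * \<bar>zs_norm r\<bar>) * \<bar>n\<bar> \<le> \<bar>n\<bar> * \<bar>n\<bar>"
    by (simp add: abs_mult mult.assoc)
  then have "2 * \<bar>zs_norm r\<bar> \<le> \<bar>n\<bar>"
    using \<open>n \<noteq> 0\<close> by (meson mult_right_le_imp_le zero_less_abs_iff)
  then show ?thesis unfolding r_def n_def by blast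
qed

lemma zs_ideal_mul_closed: "zs_ideal I \<Longrightarrow> x \<in> I \<Longrightarrow> zs_mul x r \<in> I"
  unfolding zs_ideal_def by (metis zs_mul_commute)

lemma zs_principal_if_min_norm:
  assumes I: "zs_ideal I" and "\<beta> \<in> I" "\<beta> \<noteq> zs_zero"
    and min: "\<And>\<gamma>. \<gamma> \<in> I \<Longrightarrow> \<gamma> \<noteq> zs_zero \<Longrightarrow> \<bar>zs_norm \<beta>\<bar> \<le> \<bar>zs_norm \<gamma>\<bar>"
  shows "I = zs_principal \<beta>"
proof
  show "zs_principal \<beta> \<subseteq> I"
    using zs_ideal_mul_closed[OF I \<open>\<beta> \<in> I\<close>] unfolding zs_principal_def by blast
  show "I \<subseteq> zs_principal \<beta>"
  proof
    fix \<gamma> assume "\<gamma> \<in> I"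
    obtain q where q: "2 * \<bar>zs_norm (zs_add \<gamma> (zs_mul q \<beta>))\<bar> \<le> \<bar>zs_norm \<beta>\<bar>"
      using zs_euclidean_division[OF \<open>\<beta> \<noteq> zs_zero\<close>] by blast
    have "zs_add \<gamma> (zs_mul q \<beta>) \<in> I"
      using I \<open>\<gamma> \<in> I\<close> \<open>\<beta> \<in> I\<close> unfolding zs_ideal_def by blast
    moreover have "\<bar>zs_norm (zs_add \<gamma> (zs_mul q \<beta>))\<bar> < \<bar>zs_norm \<beta>\<bar>"
      using q \<open>\<beta> \<noteq> zs_zero\<close> zs_norm_eq_0_iff by fastforce
    ultimately have "zs_add \<gamma> (zs_mul q \<beta>) = zs_zero"
      using min by fastforce
    then have "\<gamma> = zs_mul \<beta> (- fst q, - snd q)"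
      unfolding zs_zero_def zs_add_def zs_mul_def by (simp add: prod_eq_iff algebra_simps)
    then show "\<gamma> \<in> zs_principal \<beta>" unfolding zs_principal_def by blast
  qed
qed

lemma ex_min_nonneg_int:
  fixes f :: "'a \<Rightarrow> int"
  assumes "P x" and "\<And>y. 0 \<le> f y"
  shows "\<exists>y. P y \<and> (\<forall>z. P z \<longrightarrow> f y \<le> f z)"
  using ex_has_least_nat[of P x "\<lambda>y. nat (f y)"] assms(1) nat_le_eq_zle assms(2) by metis

text \<open>\<open>1 + \<surd>2\<close> and \<open>-1 + \<surd>2\<close> are units; if neither shortens \<open>x\<close>, then \<open>4\<bar>ab\<bar> \<le> a\<^sup>2 + 2b\<^sup>2\<close>
  for \<open>x = a + b\<surd>2\<close>, and \<open>N(x)\<^sup>2 = (a\<^sup>2 + 2b\<^sup>2)\<^sup>2 - 8a\<^sup>2b\<^sup>2\<close> is at least half of \<open>(a\<^sup>2 + 2b\<^sup>2)\<^sup>2\<close>.\<close>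
lemma emb_sq_less_4_abs_norm:
  assumes "x \<noteq> zs_zero"
    and "emb_sq x \<le> emb_sq (zs_mul x (1, 1))" "emb_sq x \<le> emb_sq (zs_mul x (-1, 1))"
  shows "emb_sq x < 4 * \<bar>zs_norm x\<bar>"
proof -
  obtain a b where x: "x = (a, b)" by fastforce
  define s where "s = a\<^sup>2 + 2 * b\<^sup>2"
  have "s > 0"
    using assms(1) unfolding x s_def zs_zero_def
    by (auto simp: add_pos_nonneg add_nonneg_pos)
  have "4 * \<bar>a * b\<bar> \<le> s"
    using assms(2,3) unfolding x s_def emb_sq_def zs_mul_def
    by (simp add: power2_eq_square algebra_simps abs_if)
  then have "(4 * \<bar>a * b\<bar>)\<^sup>2 \<le> s\<^sup>2" by (rule power_mono) simp
  then have "16 * (a * b)\<^sup>2 \<le> s\<^sup>2" by (simp add: power_mult_distrib)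
  moreover have "(zs_norm x)\<^sup>2 = s\<^sup>2 - 8 * (a * b)\<^sup>2"
    unfolding x s_def zs_norm_def by (simp add: power2_eq_square algebra_simps)
  moreover have "0 < s\<^sup>2" using \<open>s > 0\<close> by simp
  moreover have "(2 * \<bar>zs_norm x\<bar>)\<^sup>2 = 4 * (zs_norm x)\<^sup>2" by (simp add: power_mult_distrib)
  ultimately have "s\<^sup>2 < (2 * \<bar>zs_norm x\<bar>)\<^sup>2" by linarith
  then have "s < 2 * \<bar>zs_norm x\<bar>"
    by (rule power_less_imp_less_base) simp
  then show ?thesis unfolding x s_def emb_sq_def zs_norm_def by simp
qed

lemma emb_sq_min_on_principal:
  assumes "I = zs_principal \<delta>" and "emb_sq \<delta> < 4 * \<bar>zs_norm \<delta>\<bar>"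
    and associates: "\<And>u. \<bar>zs_norm u\<bar> = 1 \<Longrightarrow> emb_sq \<delta> \<le> emb_sq (zs_mul \<delta> u)"
    and "\<gamma> \<in> I" "\<gamma> \<noteq> zs_zero"
  shows "emb_sq \<delta> \<le> emb_sq \<gamma>"
proof -
  obtain r where \<gamma>: "\<gamma> = zs_mul \<delta> r"
    using assms(1,4) unfolding zs_principal_def by blast
  show ?thesis
  proof (cases "\<bar>zs_norm r\<bar> = 1")
    case True
    then show ?thesis using associates \<gamma> by blast
  next
    case False
    have "zs_norm r \<noteq> 0"
      using \<open>\<gamma> \<noteq> zs_zero\<close> \<gamma> by (auto simp: zs_norm_eq_0_iff[symmetric] zs_norm_mult)
    with False have "2 \<le> \<bar>zs_norm r\<bar>" by linarith
    then have "2 * \<bar>zs_norm \<delta>\<bar> \<le> \<bar>zs_norm \<gamma>\<bar>"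
      unfolding \<gamma> by (simp add: zs_norm_mult abs_mult mult.commute mult_left_mono)
    with assms(2) emb_sq_ge_abs_norm[of \<gamma>] show ?thesis by linarith
  qed
qed

lemma zs_ideal_ex_min_abs_norm:
  assumes "zs_ideal I" and "I \<noteq> {zs_zero}"
  obtains \<beta> where "\<beta> \<in> I" "\<beta> \<noteq> zs_zero"
    and "\<And>\<gamma>. \<gamma> \<in> I \<Longrightarrow> \<gamma> \<noteq> zs_zero \<Longrightarrow> \<bar>zs_norm \<beta>\<bar> \<le> \<bar>zs_norm \<gamma>\<bar>"
proof -
  obtain x where "x \<in> I" "x \<noteq> zs_zero"
    using assms unfolding zs_ideal_def by blast
  then show ?thesis
    using that ex_min_nonneg_int[of "\<lambda>x. x \<in> I \<and> x \<noteq> zs_zero" x "\<lambda>x. \<bar>zs_norm x\<bar>"] by auto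
qed

theorem theorem6:
  fixes I :: "zsqrt2 set"
  assumes "zs_ideal I" and "I \<noteq> {zs_zero}"
  shows "\<exists>\<alpha>\<in>I. I = zs_principal \<alpha> \<and> \<alpha> \<noteq> zs_zero \<and>
           (\<forall>\<gamma>\<in>I. \<gamma> \<noteq> zs_zero \<longrightarrow> emb_norm \<alpha> \<le> emb_norm \<gamma>)"
proof -
  obtain \<beta> where \<beta>: "\<beta> \<in> I" "\<beta> \<noteq> zs_zero"
    and \<beta>_min: "\<And>\<gamma>. \<gamma> \<in> I \<Longrightarrow> \<gamma> \<noteq> zs_zero \<Longrightarrow> \<bar>zs_norm \<beta>\<bar> \<le> \<bar>zs_norm \<gamma>\<bar>"
    using zs_ideal_ex_min_abs_norm[OF assms] by blast
  define G where "G = {\<delta> \<in> I. \<delta> \<noteq> zs_zero \<and> \<bar>zs_norm \<delta>\<bar> = \<bar>zs_norm \<beta>\<bar>}"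
  have G_generates: "I = zs_principal \<delta>" if "\<delta> \<in> G" for \<delta>
    using that \<beta>_min by (intro zs_principal_if_min_norm[OF assms(1)]) (auto simp: G_def)
  have G_associate: "zs_mul \<delta> u \<in> G" if "\<delta> \<in> G" "\<bar>zs_norm u\<bar> = 1" for \<delta> u
    using that zs_ideal_mul_closed[OF assms(1)]
    by (auto simp: G_def zs_norm_mult abs_mult zs_norm_eq_0_iff[symmetric])
  obtain \<delta> where "\<delta> \<in> G" and \<delta>_min: "\<And>\<gamma>. \<gamma> \<in> G \<Longrightarrow> emb_sq \<delta> \<le> emb_sq \<gamma>"
    using ex_min_nonneg_int[of "\<lambda>x. x \<in> G" \<beta> emb_sq] \<beta> by (auto simp: G_def emb_sq_def)
  have associates: "emb_sq \<delta> \<le> emb_sq (zs_mul \<delta> u)" if "\<bar>zs_norm u\<bar> = 1" for u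
    using \<delta>_min G_associate[OF \<open>\<delta> \<in> G\<close> that] .
  have "emb_sq \<delta> < 4 * \<bar>zs_norm \<delta>\<bar>"
    using \<open>\<delta> \<in> G\<close> by (intro emb_sq_less_4_abs_norm associates) (auto simp: G_def zs_norm_def)
  then show ?thesis
    using \<open>\<delta> \<in> G\<close> G_generates[OF \<open>\<delta> \<in> G\<close>] emb_sq_min_on_principal[OF _ _ associates]
    by (auto simp: G_def emb_norm_eq_sqrt_emb_sq)
qed

end
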